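(* Let $T$ be a compact metric space with a finite Borel measure, $C:T\times T\to\mathbb{R}$ a continuous symmetric positive semidefinite kernel with Mercer expansion $C(s,t)=\sum_j\lambda_j\phi_j(s)\phi_j(t)$ ($\lambda_1\ge\lambda_2\ge\dots>0$, $\{\phi_j\}$ orthonormal in $L^2(T)$), and let $\eta>1$ be such that $\mathrm{tr}(C^{\eta-1})=\sum_j\lambda_j^{\eta-1}<\infty$ and $\kappa^2:=\sup_{x\in T}C^\eta(x,x)<\infty$, where $C^\eta(s,t)=\sum_j\lambda_j^\eta\phi_j(s)\phi_j(t)$. Let $\mathcal{H}_{C^\eta}$ be the RKHS of $C^\eta$ with norm $\|\cdot\|_{C^\eta}$. Data records are $d=(x,y)\in T\times\mathcal{Y}$, and the loss is $L(d,f)=\ell(y,f(x))$ where, for each $y$, $u\mapsto\ell(y,u)$ is convex and $M$-Lipschitz on $\mathbb{R}$ ($M$-admissible loss). For a dataset $D=(d_1,\dots,d_n)$ and $\psi>0$, let $\hat f_D$ be the minimizer over $f\in\mathcal{H}_{C^\eta}$ of $\frac1n\sum_{i=1}^nL(d_i,f)+\psi\|f\|_{C^\eta}^2$. Then $$\sup_{D\sim D'}\|\hat f_D-\hat f_{D'}\|_{1,C}\le\frac{M}{\psi n}\sqrt{\sup_{x}C^\eta(x,x)}\,\sqrt{\mathrm{tr}(C^{\eta-1})}.$$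
   Context: For $h\in L^2(T)$, $h_j=\langle h,\phi_j\rangle_{L^2}$ and $\|h\|_{1,C}=\sum_j|h_j|/\sqrt{\lambda_j}$. Datasets $D\sim D'$ are adjacent if they differ in exactly one record. (The paper's display writes the penalty as $\psi\|f\|_{C^\eta}$; its argument uses the squared norm, as stated here.) *)

theory Defs
  imports "HOL-Analysis.Analysis"
begin

definition psd_kernel :: "('a \<Rightarrow> 'a \<Rightarrow> real) \<Rightarrow> bool" where
  "psd_kernel K \<longleftrightarrow>
     (\<forall>(n::nat) (x::nat \<Rightarrow> 'a) (c::nat \<Rightarrow> real).
        (\<Sum>i<n. \<Sum>j<n. c i * c j * K (x i) (x j)) \<ge> 0)"

definition kernel_pow :: "(nat \<Rightarrow> real) \<Rightarrow> (nat \<Rightarrow> 'a \<Rightarrow> real) \<Rightarrow> real \<Rightarrow> 'a \<Rightarrow> 'a \<Rightarrow> real" where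
  "kernel_pow lam phi e s t = (\<Sum>j. lam j powr e * phi j s * phi j t)"

definition rkhs :: "('a \<Rightarrow> 'a \<Rightarrow> real) \<Rightarrow> ('a \<Rightarrow> real) set
                     \<Rightarrow> (('a \<Rightarrow> real) \<Rightarrow> ('a \<Rightarrow> real) \<Rightarrow> real) \<Rightarrow> bool" where
  "rkhs K H ip \<longleftrightarrow>
     (\<lambda>x. 0) \<in> H \<and>
     (\<forall>f\<in>H. \<forall>g\<in>H. \<forall>a b::real. (\<lambda>x. a * f x + b * g x) \<in> H) \<and>
     (\<forall>f\<in>H. \<forall>g\<in>H. ip f g = ip g f) \<and>
     (\<forall>f\<in>H. \<forall>g\<in>H. \<forall>h\<in>H. \<forall>a b::real.
        ip (\<lambda>x. a * f x + b * g x) h = a * ip f h + b * ip g h) \<and>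
     (\<forall>f\<in>H. 0 \<le> ip f f \<and> (ip f f = 0 \<longrightarrow> f = (\<lambda>x. 0))) \<and>
     (\<forall>s::nat \<Rightarrow> ('a \<Rightarrow> real). (\<forall>n. s n \<in> H) \<and>
        (\<forall>e>0. \<exists>N. \<forall>m\<ge>N. \<forall>k\<ge>N.
            sqrt (ip (\<lambda>x. s m x - s k x) (\<lambda>x. s m x - s k x)) < e)
        \<longrightarrow> (\<exists>f\<in>H. (\<lambda>n. sqrt (ip (\<lambda>x. s n x - f x) (\<lambda>x. s n x - f x)))
                         \<longlonglongrightarrow> 0)) \<and>
     (\<forall>x. (\<lambda>s. K s x) \<in> H) \<and>
     (\<forall>f\<in>H. \<forall>x. ip f (\<lambda>s. K s x) = f x)"

definition l2_coeff :: "'a measure \<Rightarrow> (nat \<Rightarrow> 'a \<Rightarrow> real) \<Rightarrow> ('a \<Rightarrow> real) \<Rightarrow> nat \<Rightarrow> real" where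
  "l2_coeff \<mu> phi h j = (LINT x|\<mu>. h x * phi j x)"

definition norm_1C :: "'a measure \<Rightarrow> (nat \<Rightarrow> real) \<Rightarrow> (nat \<Rightarrow> 'a \<Rightarrow> real) \<Rightarrow> ('a \<Rightarrow> real) \<Rightarrow> ennreal" where
  "norm_1C \<mu> lam phi h = (\<Sum>j. ennreal (\<bar>l2_coeff \<mu> phi h j\<bar> / sqrt (lam j)))"

definition adjacent :: "'d list \<Rightarrow> 'd list \<Rightarrow> bool" where
  "adjacent D D' \<longleftrightarrow> length D = length D' \<and> card {i. i < length D \<and> D ! i \<noteq> D' ! i} = 1"

definition reg_risk :: "('y \<Rightarrow> real \<Rightarrow> real) \<Rightarrow> real \<Rightarrow> (('a \<Rightarrow> real) \<Rightarrow> ('a \<Rightarrow> real) \<Rightarrow> real)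
                         \<Rightarrow> ('a \<times> 'y) list \<Rightarrow> ('a \<Rightarrow> real) \<Rightarrow> real" where
  "reg_risk loss \<psi> ip D f =
     (1 / real (length D)) * (\<Sum>i<length D. loss (snd (D ! i)) (f (fst (D ! i)))) + \<psi> * ip f f"

definition is_minimizer :: "('y \<Rightarrow> real \<Rightarrow> real) \<Rightarrow> real \<Rightarrow> ('a \<Rightarrow> real) set
      \<Rightarrow> (('a \<Rightarrow> real) \<Rightarrow> ('a \<Rightarrow> real) \<Rightarrow> real) \<Rightarrow> ('a \<times> 'y) list \<Rightarrow> ('a \<Rightarrow> real) \<Rightarrow> bool" where
  "is_minimizer loss \<psi> H ip D f \<longleftrightarrow> f \<in> H \<and> (\<forall>g\<in>H. reg_risk loss \<psi> ip D f \<le> reg_risk loss \<psi> ip D g)"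

end

theory Submission
  imports Defs
begin

(* Convexity of the loss and the penalty \<psi>\<parallel>f\<parallel>\<^sup>2 make each minimiser a sharp minimum of modulus \<psi>.
   Adding the growth inequalities of the minimisers for two adjacent datasets, everything cancels
   except the losses at the differing record; the Lipschitz bound and |g x| \<le> \<parallel>g\<parallel> \<kappa> then give
   \<parallel>f_D - f_D'\<parallel> \<le> M \<kappa> / (\<psi> n).
   Writing |h_j| / sqrt \<lambda>_j = (|h_j| / \<lambda>_j^(\<eta>/2)) \<lambda>_j^((\<eta>-1)/2), Cauchy-Schwarz reduces the
   bound on the 1,C-norm to Bessel's inequality \<Sum> h_j\<^sup>2 / \<lambda>_j^\<eta> \<le> \<parallel>h\<parallel>\<^sup>2. The eigenfunctions need
   not lie in the RKHS, so Bessel's inequality is derived from the nonnegativity of the double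
   integral of a positive semidefinite kernel, proved by integrating out one point at a time. *)

section \<open>Reproducing kernel Hilbert spaces\<close>

locale rkhs_space =
  fixes K :: "'a \<Rightarrow> 'a \<Rightarrow> real" and H :: "('a \<Rightarrow> real) set"
    and ip :: "('a \<Rightarrow> real) \<Rightarrow> ('a \<Rightarrow> real) \<Rightarrow> real"
  assumes rkhs: "rkhs K H ip"
begin

lemma zero_mem: "(\<lambda>x. 0) \<in> H"
  using rkhs unfolding rkhs_def by blast

lemma lin_comb_mem: "f \<in> H \<Longrightarrow> g \<in> H \<Longrightarrow> (\<lambda>x. a * f x + b * g x) \<in> H"
  using rkhs unfolding rkhs_def by blast

lemma ip_commute: "f \<in> H \<Longrightarrow> g \<in> H \<Longrightarrow> ip f g = ip g f"
  using rkhs unfolding rkhs_def by blast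

lemma ip_lin_comb_left:
  "f \<in> H \<Longrightarrow> g \<in> H \<Longrightarrow> h \<in> H \<Longrightarrow> ip (\<lambda>x. a * f x + b * g x) h = a * ip f h + b * ip g h"
  using rkhs unfolding rkhs_def by blast

lemma ip_self_nonneg: "f \<in> H \<Longrightarrow> 0 \<le> ip f f"
  using rkhs unfolding rkhs_def by blast

lemma ip_self_eq_0D: "f \<in> H \<Longrightarrow> ip f f = 0 \<Longrightarrow> f = (\<lambda>x. 0)"
  using rkhs unfolding rkhs_def by blast

lemma kernel_section_mem: "(\<lambda>s. K s x) \<in> H"
  using rkhs unfolding rkhs_def by blast

lemma reproducing: "f \<in> H \<Longrightarrow> ip f (\<lambda>s. K s x) = f x"
  using rkhs unfolding rkhs_def by blast

lemma diff_mem: "f \<in> H \<Longrightarrow> g \<in> H \<Longrightarrow> (\<lambda>x. f x - g x) \<in> H"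
  using lin_comb_mem[of f g 1 "-1"] by simp

lemma ip_zero_left: "h \<in> H \<Longrightarrow> ip (\<lambda>x. 0) h = 0"
  using ip_lin_comb_left[of h h h 0 0] by simp

lemma ip_lin_comb_self:
  assumes f: "f \<in> H" and g: "g \<in> H"
  shows "ip (\<lambda>x. a * f x + b * g x) (\<lambda>x. a * f x + b * g x)
           = a\<^sup>2 * ip f f + 2 * a * b * ip f g + b\<^sup>2 * ip g g"
proof -
  let ?w = "\<lambda>x. a * f x + b * g x"
  have w: "?w \<in> H" using lin_comb_mem f g .
  have "ip ?w ?w = a * ip ?w f + b * ip ?w g"
    using ip_lin_comb_left[OF f g w] ip_commute[OF f w] ip_commute[OF g w] by simp
  also have "\<dots> = a * (a * ip f f + b * ip g f) + b * (a * ip f g + b * ip g g)"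
    using ip_lin_comb_left[OF f g f] ip_lin_comb_left[OF f g g] by simp
  finally show ?thesis using ip_commute[OF f g] by (simp add: algebra_simps power2_eq_square)
qed

lemma ip_diff_self_commute:
  "f \<in> H \<Longrightarrow> g \<in> H \<Longrightarrow>
     ip (\<lambda>x. f x - g x) (\<lambda>x. f x - g x) = ip (\<lambda>x. g x - f x) (\<lambda>x. g x - f x)"
  using ip_lin_comb_self[of f g 1 "-1"] ip_lin_comb_self[of g f 1 "-1"] ip_commute[of f g] by simp

lemma cauchy_schwarz:
  assumes f: "f \<in> H" and g: "g \<in> H"
  shows "(ip f g)\<^sup>2 \<le> ip f f * ip g g"
proof (cases "ip g g = 0")
  case True
  then have "g = (\<lambda>x. 0)" using ip_self_eq_0D g by blast
  then show ?thesis using ip_commute[OF f g] ip_zero_left[OF f] ip_zero_left[OF zero_mem] by simp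
next
  case False
  then have gg: "ip g g > 0" using ip_self_nonneg[OF g] by simp
  define t where "t = ip f g / ip g g"
  have "0 \<le> ip (\<lambda>x. 1 * f x + (-t) * g x) (\<lambda>x. 1 * f x + (-t) * g x)"
    using ip_self_nonneg lin_comb_mem f g by blast
  also have "\<dots> = ip f f - (ip f g)\<^sup>2 / ip g g"
    using ip_lin_comb_self[OF f g, of 1 "-t"] gg unfolding t_def
    by (simp add: field_simps power2_eq_square)
  finally show ?thesis using gg by (simp add: field_simps)
qed

lemma eval_bound:
  assumes f: "f \<in> H"
  shows "\<bar>f x\<bar> \<le> sqrt (ip f f) * sqrt (K x x)"
proof -
  have "(f x)\<^sup>2 \<le> ip f f * K x x"
    using cauchy_schwarz[OF f kernel_section_mem] reproducing[OF f]
      reproducing[OF kernel_section_mem]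
    by simp
  then have "sqrt ((f x)\<^sup>2) \<le> sqrt (ip f f * K x x)" by (rule real_sqrt_le_mono)
  then show ?thesis by (simp add: real_sqrt_mult)
qed

lemma kernel_comb_mem_ip:
  fixes n :: nat
  shows "(\<lambda>t. \<Sum>i<n. c i * K t (x i)) \<in> H \<and>
   (\<forall>h\<in>H. ip (\<lambda>t. \<Sum>i<n. c i * K t (x i)) h = (\<Sum>i<n. c i * h (x i)))"
proof (induction n)
  case 0
  then show ?case using zero_mem ip_zero_left by simp
next
  case (Suc n)
  let ?u = "\<lambda>t. \<Sum>i<n. c i * K t (x i)"
  have u: "?u \<in> H" using Suc by blast
  have split: "(\<lambda>t. \<Sum>i<Suc n. c i * K t (x i)) = (\<lambda>t. 1 * ?u t + c n * K t (x n))" by simp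
  have "ip (\<lambda>t. 1 * ?u t + c n * K t (x n)) h = (\<Sum>i<Suc n. c i * h (x i))" if h: "h \<in> H" for h
    using ip_lin_comb_left[OF u kernel_section_mem h, of 1 "c n" "x n"] Suc h
      ip_commute[OF kernel_section_mem h] reproducing[OF h] by simp
  then show ?case unfolding split using lin_comb_mem[OF u kernel_section_mem] by blast
qed

lemma weighted_eval_sum_sq_le:
  fixes n :: nat
  assumes h: "h \<in> H"
  shows "(\<Sum>i<n. c i * h (x i))\<^sup>2 \<le> ip h h * (\<Sum>i<n. \<Sum>k<n. c i * c k * K (x i) (x k))"
proof -
  let ?u = "\<lambda>t. \<Sum>i<n. c i * K t (x i)"
  have u: "?u \<in> H" and ip_u: "\<And>g. g \<in> H \<Longrightarrow> ip ?u g = (\<Sum>i<n. c i * g (x i))"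
    using kernel_comb_mem_ip by blast+
  have "ip ?u ?u = (\<Sum>i<n. \<Sum>k<n. c i * c k * K (x i) (x k))"
    using ip_u[OF u] by (simp add: sum_distrib_left mult.assoc)
  then show ?thesis using cauchy_schwarz[OF h u] ip_commute[OF h u] ip_u[OF h] by simp
qed

end

section \<open>Stability of regularised risk minimisers\<close>

lemma nonneg_if_nonneg_plus_small:
  fixes y c :: real
  assumes "\<And>t. 0 < t \<Longrightarrow> t \<le> 1 \<Longrightarrow> 0 \<le> y + t * c"
  shows "0 \<le> y"
proof (rule ccontr)
  assume "\<not> 0 \<le> y"
  define t where "t = min 1 (- y / (2 * (\<bar>c\<bar> + 1)))"
  have "0 < - y / (2 * (\<bar>c\<bar> + 1))" using \<open>\<not> 0 \<le> y\<close> by (intro divide_pos_pos) auto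
  then have t: "0 < t" "t \<le> 1" unfolding t_def by auto
  have "t * c \<le> t * (\<bar>c\<bar> + 1)" using t by (intro mult_left_mono) auto
  also have "\<dots> \<le> - y / (2 * (\<bar>c\<bar> + 1)) * (\<bar>c\<bar> + 1)"
    unfolding t_def by (intro mult_right_mono) auto
  also have "\<dots> = - y / 2" by (simp add: field_simps)
  finally show False using assms[OF t] \<open>\<not> 0 \<le> y\<close> by linarith
qed

lemma sqrt_le_of_le_mult_sqrt:
  fixes e c \<psi> :: real
  assumes "\<psi> * e \<le> c * sqrt e" "0 \<le> e" "0 < \<psi>" "0 \<le> c"
  shows "sqrt e \<le> c / \<psi>"
proof (cases "e = 0")
  case False
  then have "0 < sqrt e" using assms(2) by simp
  moreover have "\<psi> * sqrt e * sqrt e \<le> c * sqrt e" using assms(1,2) by (simp add: mult.assoc)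
  ultimately have "\<psi> * sqrt e \<le> c" by simp
  then show ?thesis using assms(3) by (simp add: field_simps)
qed (use assms in simp)

definition emp_risk :: "('y \<Rightarrow> real \<Rightarrow> real) \<Rightarrow> ('a \<times> 'y) list \<Rightarrow> ('a \<Rightarrow> real) \<Rightarrow> real" where
  "emp_risk loss D f = (\<Sum>i<length D. loss (snd (D ! i)) (f (fst (D ! i)))) / real (length D)"

lemma reg_risk_eq_emp_risk: "reg_risk loss \<psi> ip D f = emp_risk loss D f + \<psi> * ip f f"
  unfolding reg_risk_def emp_risk_def by simp

lemma emp_risk_convex:
  assumes "\<And>y. convex_on UNIV (loss y)" and "0 \<le> t" "t \<le> 1"
  shows "emp_risk loss D (\<lambda>x. (1 - t) * f x + t * g x)
           \<le> (1 - t) * emp_risk loss D f + t * emp_risk loss D g"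
proof -
  have "(\<Sum>i<length D. loss (snd (D ! i)) ((1 - t) * f (fst (D ! i)) + t * g (fst (D ! i))))
     \<le> (\<Sum>i<length D. (1 - t) * loss (snd (D ! i)) (f (fst (D ! i)))
                      + t * loss (snd (D ! i)) (g (fst (D ! i))))"
    using convex_onD[OF assms(1)] assms(2,3) by (intro sum_mono) simp
  also have "\<dots> = (1 - t) * (\<Sum>i<length D. loss (snd (D ! i)) (f (fst (D ! i))))
                   + t * (\<Sum>i<length D. loss (snd (D ! i)) (g (fst (D ! i))))"
    by (simp add: sum.distrib sum_distrib_left)
  finally have "(\<Sum>i<length D. loss (snd (D ! i)) ((1 - t) * f (fst (D ! i)) + t * g (fst (D ! i))))
                  / real (length D)
     \<le> ((1 - t) * (\<Sum>i<length D. loss (snd (D ! i)) (f (fst (D ! i))))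
         + t * (\<Sum>i<length D. loss (snd (D ! i)) (g (fst (D ! i))))) / real (length D)"
    by (rule divide_right_mono) simp
  then show ?thesis unfolding emp_risk_def by (simp add: add_divide_distrib)
qed

lemma adjacent_reg_risk_diff:
  assumes "adjacent D D'"
  obtains k where "k < length D"
    "\<And>f. reg_risk loss \<psi> ip D f - reg_risk loss \<psi> ip D' f
           = (loss (snd (D ! k)) (f (fst (D ! k))) - loss (snd (D' ! k)) (f (fst (D' ! k))))
             / real (length D)"
proof -
  let ?n = "length D"
  have len: "length D' = ?n" using assms unfolding adjacent_def by simp
  have "card {i. i < ?n \<and> D ! i \<noteq> D' ! i} = 1" using assms unfolding adjacent_def by blast
  then obtain k where k: "{i. i < ?n \<and> D ! i \<noteq> D' ! i} = {k}" by (rule card_1_singletonE)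
  then have k_lt: "k < ?n" and same: "\<And>i. i < ?n \<Longrightarrow> i \<noteq> k \<Longrightarrow> D ! i = D' ! i" by blast+
  let ?l = "\<lambda>E f i. loss (snd (E ! i)) (f (fst (E ! i)))"
  have "(\<Sum>i<?n. ?l D f i - ?l D' f i) = (\<Sum>i\<in>{k}. ?l D f i - ?l D' f i)" for f
    by (rule sum.mono_neutral_right) (use k_lt same in auto)
  then have "reg_risk loss \<psi> ip D f - reg_risk loss \<psi> ip D' f = (?l D f k - ?l D' f k) / real ?n"
    for f
    unfolding reg_risk_def len by (simp add: sum_subtractf flip: diff_divide_distrib)
  with k_lt show thesis by (rule that)
qed

context rkhs_space
begin

text \<open>Compare \<open>f\<close> with \<open>(1 - t) f + t g\<close> and let \<open>t \<rightarrow> 0\<close>.\<close>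
lemma reg_risk_quadratic_growth:
  assumes conv: "\<And>y. convex_on UNIV (loss y)"
    and mini: "is_minimizer loss \<psi> H ip D f" and g: "g \<in> H"
  shows "reg_risk loss \<psi> ip D f + \<psi> * ip (\<lambda>x. g x - f x) (\<lambda>x. g x - f x) \<le> reg_risk loss \<psi> ip D g"
proof -
  have f: "f \<in> H" and min_f: "\<And>w. w \<in> H \<Longrightarrow> reg_risk loss \<psi> ip D f \<le> reg_risk loss \<psi> ip D w"
    using mini unfolding is_minimizer_def by blast+
  define Y where "Y = emp_risk loss D g - emp_risk loss D f + 2 * \<psi> * (ip f g - ip f f)"
  define E where "E = ip f f - 2 * ip f g + ip g g"
  have E_eq: "ip (\<lambda>x. g x - f x) (\<lambda>x. g x - f x) = E"
    using ip_lin_comb_self[OF g f, of 1 "-1"] ip_commute[OF f g] unfolding E_def by simp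
  have "0 \<le> Y + t * (\<psi> * E)" if t: "0 < t" "t \<le> 1" for t
  proof -
    let ?ft = "\<lambda>x. (1 - t) * f x + t * g x"
    have "emp_risk loss D f + \<psi> * ip f f \<le> emp_risk loss D ?ft + \<psi> * ip ?ft ?ft"
      using min_f[OF lin_comb_mem[OF f g]] unfolding reg_risk_eq_emp_risk .
    also have "\<dots> \<le> (1 - t) * emp_risk loss D f + t * emp_risk loss D g
                     + \<psi> * ((1 - t)\<^sup>2 * ip f f + 2 * (1 - t) * t * ip f g + t\<^sup>2 * ip g g)"
      using emp_risk_convex[OF conv, where t=t and D=D and f=f and g=g] t
        ip_lin_comb_self[OF f g, of "1 - t" t]
      by simp
    finally have "0 \<le> t * (Y + t * (\<psi> * E))"
      unfolding Y_def E_def by (simp add: algebra_simps power2_eq_square)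
    then show ?thesis using t by (simp add: zero_le_mult_iff)
  qed
  then have "0 \<le> Y" by (rule nonneg_if_nonneg_plus_small)
  moreover have "reg_risk loss \<psi> ip D g - reg_risk loss \<psi> ip D f = Y + \<psi> * E"
    unfolding reg_risk_eq_emp_risk Y_def E_def by (simp add: algebra_simps)
  ultimately show ?thesis using E_eq by simp
qed

lemma minimizer_stability:
  assumes conv: "\<And>y. convex_on UNIV (loss y)" and lip: "\<And>y. M-lipschitz_on UNIV (loss y)"
    and \<psi>: "0 < \<psi>" and diag: "\<And>x. K x x \<le> \<kappa>\<^sup>2" and \<kappa>: "0 \<le> \<kappa>"
    and adj: "adjacent D D'"
    and mini: "is_minimizer loss \<psi> H ip D f" and mini': "is_minimizer loss \<psi> H ip D' f'"
  shows "sqrt (ip (\<lambda>x. f x - f' x) (\<lambda>x. f x - f' x)) \<le> M * \<kappa> / (\<psi> * real (length D))"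
proof -
  have f: "f \<in> H" and f': "f' \<in> H" using mini mini' unfolding is_minimizer_def by blast+
  define E where "E = ip (\<lambda>x. f x - f' x) (\<lambda>x. f x - f' x)"
  have E: "0 \<le> E" unfolding E_def using ip_self_nonneg[OF diff_mem[OF f f']] .
  obtain k where k: "k < length D" and diff:
    "\<And>w. reg_risk loss \<psi> ip D w - reg_risk loss \<psi> ip D' w
       = (loss (snd (D ! k)) (w (fst (D ! k))) - loss (snd (D' ! k)) (w (fst (D' ! k))))
         / real (length D)"
    using adjacent_reg_risk_diff[OF adj] by blast
  define n where "n = real (length D)"
  have n: "0 < n" using k unfolding n_def by (cases D) auto
  have M: "0 \<le> M" using lipschitz_on_nonneg[OF lip] .
  have dev: "\<bar>f x - f' x\<bar> \<le> sqrt E * \<kappa>" for x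
  proof -
    have "\<bar>f x - f' x\<bar> \<le> sqrt E * sqrt (K x x)"
      using eval_bound[OF diff_mem[OF f f']] unfolding E_def .
    also have "\<dots> \<le> sqrt E * \<kappa>"
      using real_sqrt_le_mono[OF diag[of x]] \<kappa> E by (intro mult_left_mono) auto
    finally show ?thesis .
  qed
  have loss_le: "loss y a - loss y b \<le> M * \<bar>a - b\<bar>" for y a b
    using lipschitz_onD[OF lip, of a b y] by (simp add: dist_real_def)
  let ?x = "fst (D ! k)" and ?y = "snd (D ! k)" and ?x' = "fst (D' ! k)" and ?y' = "snd (D' ! k)"
  have "2 * (\<psi> * E) \<le> (reg_risk loss \<psi> ip D f' - reg_risk loss \<psi> ip D f)
                       + (reg_risk loss \<psi> ip D' f - reg_risk loss \<psi> ip D' f')"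
    using reg_risk_quadratic_growth[OF conv mini f'] reg_risk_quadratic_growth[OF conv mini' f]
      ip_diff_self_commute[OF f f'] unfolding E_def by simp
  also have "\<dots> = ((loss ?y (f' ?x) - loss ?y (f ?x)) + (loss ?y' (f ?x') - loss ?y' (f' ?x'))) / n"
    using diff[of f] diff[of f'] unfolding n_def
    by (simp add: diff_divide_distrib add_divide_distrib)
  also have "\<dots> \<le> (M * (sqrt E * \<kappa>) + M * (sqrt E * \<kappa>)) / n"
  proof (intro divide_right_mono add_mono)
    show "loss ?y (f' ?x) - loss ?y (f ?x) \<le> M * (sqrt E * \<kappa>)"
      using loss_le[of ?y "f' ?x" "f ?x"] mult_left_mono[OF dev M, of ?x]
      by (simp add: abs_minus_commute)
    show "loss ?y' (f ?x') - loss ?y' (f' ?x') \<le> M * (sqrt E * \<kappa>)"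
      using loss_le[of ?y' "f ?x'" "f' ?x'"] mult_left_mono[OF dev M, of ?x'] by simp
  qed (use n in simp)
  finally have "\<psi> * E \<le> (M * \<kappa> / n) * sqrt E" by simp
  then have "sqrt E \<le> (M * \<kappa> / n) / \<psi>"
    by (rule sqrt_le_of_le_mult_sqrt) (use E \<psi> M \<kappa> n in auto)
  then show ?thesis unfolding E_def n_def by (simp add: mult.commute)
qed

end

section \<open>Double integrals of positive semidefinite kernels\<close>

lemma nonneg_if_nonneg_plus_multiples:
  fixes a b :: real
  assumes "\<And>k::nat. 0 < k \<Longrightarrow> 0 \<le> a + real k * b"
  shows "0 \<le> b"
proof (rule ccontr)
  assume "\<not> 0 \<le> b"
  then obtain k :: nat where k: "\<bar>a\<bar> < real k * (- b)" using reals_Archimedean3[of "- b"] by auto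
  then have "0 < k" by (cases k) auto
  then show False using assms[of k] k by linarith
qed

lemma sum_square_fun_upd:
  "(\<Sum>i<Suc n. \<Sum>j<Suc n. F ((x(n := s)) i) ((x(n := s)) j))
     = (\<Sum>i<n. \<Sum>j<n. F (x i) (x j)) + (\<Sum>i<n. F (x i) s + F s (x i)) + F s s"
  by (simp add: sum.lessThan_Suc sum.distrib add_ac)

text \<open>\<open>m\<^sup>2\<close> times the integral, over \<open>k\<close> further points, of the sum of \<open>F\<close> over all pairs of the
  \<open>n\<close> fixed and \<open>k\<close> free points, where \<open>m\<close> is the total mass; the four terms come from the
  fixed/fixed, fixed/free, free diagonal and free off-diagonal pairs. This closed form makes the
  positivity argument below an induction on \<open>k\<close> that never needs product measures.\<close>
definition psd_moment :: "'a measure \<Rightarrow> ('a \<Rightarrow> 'a \<Rightarrow> real) \<Rightarrow> nat \<Rightarrow> nat \<Rightarrow> (nat \<Rightarrow> 'a) \<Rightarrow> real" where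
  "psd_moment \<mu> F k n x =
     (let m = measure \<mu> (space \<mu>) in
        m ^ (k + 2) * (\<Sum>i<n. \<Sum>j<n. F (x i) (x j))
      + 2 * real k * m ^ (k + 1) * (\<Sum>i<n. LINT t|\<mu>. F (x i) t)
      + real k * m ^ (k + 1) * (LINT s|\<mu>. F s s)
      + real k * (real k - 1) * m ^ k * (LINT s|\<mu>. LINT t|\<mu>. F s t))"

context finite_measure
begin

lemma psd_moment_Suc:
  assumes sym: "\<And>s t. F s t = F t s"
    and int_section: "\<And>s. integrable M (F s)"
    and int_inner: "integrable M (\<lambda>s. LINT t|M. F s t)"
    and int_diag: "integrable M (\<lambda>s. F s s)"
  shows "psd_moment M F (Suc k) n x = (LINT s|M. psd_moment M F k (Suc n) (x(n := s)))"
proof -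
  define m where "m = measure M (space M)"
  define A where "A s = (LINT t|M. F s t)" for s
  define P where "P = (\<Sum>i<n. \<Sum>j<n. F (x i) (x j))"
  define Q where "Q = (\<Sum>i<n. A (x i))"
  define D where "D = (LINT s|M. F s s)"
  define I where "I = (LINT s|M. A s)"
  define c where "c = m^(k+2) * P + 2 * real k * m^(k+1) * Q + real k * m^(k+1) * D
                      + real k * (real k - 1) * m^k * I"
  have pairs: "(\<Sum>i<Suc n. \<Sum>j<Suc n. F ((x(n := s)) i) ((x(n := s)) j))
                 = P + 2 * (\<Sum>i<n. F (x i) s) + F s s" for s
  proof -
    have "(\<Sum>i<n. F s (x i)) = (\<Sum>i<n. F (x i) s)" by (intro sum.cong refl sym)
    then show ?thesis unfolding sum_square_fun_upd sum.distrib P_def by simp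
  qed
  have "psd_moment M F k (Suc n) (x(n := s))
          = c + 2 * m^(k+2) * (\<Sum>i<n. F (x i) s) + m^(k+2) * F s s + 2 * real k * m^(k+1) * A s"
    for s
    unfolding psd_moment_def Let_def pairs c_def m_def[symmetric] A_def[symmetric] Q_def D_def I_def
    by (simp add: sum.lessThan_Suc algebra_simps)
  moreover have "(LINT s|M. (\<Sum>i<n. F (x i) s)) = Q"
    unfolding Q_def A_def by (rule Bochner_Integration.integral_sum) (use int_section in auto)
  ultimately have "(LINT s|M. psd_moment M F k (Suc n) (x(n := s)))
                     = c * m + 2 * m^(k+2) * Q + m^(k+2) * D + 2 * real k * m^(k+1) * I"
    using int_section int_inner int_diag by (simp add: m_def D_def I_def A_def)
  also have "\<dots> = psd_moment M F (Suc k) n x"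
    unfolding psd_moment_def Let_def c_def m_def[symmetric] A_def[symmetric] P_def[symmetric]
      Q_def[symmetric] D_def[symmetric] I_def[symmetric]
    by (simp add: algebra_simps)
  finally show ?thesis by simp
qed

lemma psd_moment_nonneg:
  assumes sym: "\<And>s t. F s t = F t s"
    and psd: "\<And>(n::nat) x. 0 \<le> (\<Sum>i<n. \<Sum>j<n. F (x i) (x j))"
    and "\<And>s. integrable M (F s)" "integrable M (\<lambda>s. LINT t|M. F s t)" "integrable M (\<lambda>s. F s s)"
  shows "0 \<le> psd_moment M F k n x"
proof (induction k arbitrary: n x)
  case 0
  show ?case unfolding psd_moment_def Let_def by (simp add: psd)
next
  case (Suc k)
  then show ?case
    unfolding psd_moment_Suc[OF assms(1,3-5)] by (intro integral_nonneg_AE) auto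
qed

lemma psd_double_integral_nonneg:
  fixes F :: "'a \<Rightarrow> 'a \<Rightarrow> real"
  assumes sym: "\<And>s t. F s t = F t s"
    and psd: "\<And>(n::nat) x. 0 \<le> (\<Sum>i<n. \<Sum>j<n. F (x i) (x j))"
    and int: "\<And>s. integrable M (F s)" "integrable M (\<lambda>s. LINT t|M. F s t)"
      "integrable M (\<lambda>s. F s s)"
  shows "0 \<le> (LINT s|M. LINT t|M. F s t)"
proof -
  define m where "m = measure M (space M)"
  show ?thesis
  proof (cases "m = 0")
    case True
    then have "AE s in M. (LINT t|M. F s t) = 0"
      by (intro AE_I'[of "space M"]) (auto simp: m_def emeasure_eq_measure)
    then have "(LINT s|M. LINT t|M. F s t) = 0" by (rule integral_eq_zero_AE)
    then show ?thesis by simp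
  next
    case False
    then have m: "0 < m" unfolding m_def by (simp add: zero_less_measure_iff)
    show ?thesis
    proof (rule nonneg_if_nonneg_plus_multiples)
      fix k :: nat assume "0 < k"
      have "0 \<le> psd_moment M F k 0 x" for x by (rule psd_moment_nonneg[OF sym psd int])
      then have "0 \<le> (real k * m ^ k) * (m * (LINT s|M. F s s) - (LINT s|M. LINT t|M. F s t)
                                          + real k * (LINT s|M. LINT t|M. F s t))"
        unfolding psd_moment_def Let_def m_def[symmetric] by (simp add: algebra_simps)
      moreover have "0 < real k * m ^ k" using \<open>0 < k\<close> m by simp
      ultimately show "0 \<le> m * (LINT s|M. F s s) - (LINT s|M. LINT t|M. F s t)
                           + real k * (LINT s|M. LINT t|M. F s t)"
        by (simp add: zero_le_mult_iff)
    qed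
  qed
qed

end

section \<open>Kernels with an orthonormal eigen-expansion\<close>

lemma abs_mult_le_half_sq_sum: "\<bar>a * b\<bar> \<le> (a\<^sup>2 + b\<^sup>2) / 2" for a b :: real
  using sum_squares_bound[of "\<bar>a\<bar>" "\<bar>b\<bar>"] by (simp add: abs_mult)

lemma abs_weighted_mult_le:
  fixes w a b :: real
  assumes "0 \<le> w"
  shows "\<bar>w * a * b\<bar> \<le> (w * a\<^sup>2 + w * b\<^sup>2) / 2"
proof -
  have "\<bar>w * a * b\<bar> = w * \<bar>a * b\<bar>" using assms by (simp add: abs_mult)
  also have "\<dots> \<le> w * ((a\<^sup>2 + b\<^sup>2) / 2)"
    using assms by (intro mult_left_mono abs_mult_le_half_sq_sum)
  finally show ?thesis by (simp add: algebra_simps)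
qed

lemma summable_weighted_mult:
  fixes w f g :: "nat \<Rightarrow> real"
  assumes "\<And>j. 0 \<le> w j" "summable (\<lambda>j. w j * (f j)\<^sup>2)" "summable (\<lambda>j. w j * (g j)\<^sup>2)"
  shows "summable (\<lambda>j. w j * f j * g j)"
proof (rule summable_comparison_test)
  show "\<exists>N. \<forall>j\<ge>N. norm (w j * f j * g j) \<le> (w j * (f j)\<^sup>2 + w j * (g j)\<^sup>2) / 2"
    using abs_weighted_mult_le[OF assms(1)] by auto
  show "summable (\<lambda>j. (w j * (f j)\<^sup>2 + w j * (g j)\<^sup>2) / 2)"
    using assms(2,3) by (intro summable_divide summable_add)
qed

locale eigen_kernel = finite_measure \<mu> for \<mu> :: "'a measure" +
  fixes w :: "nat \<Rightarrow> real" and \<phi> :: "nat \<Rightarrow> 'a \<Rightarrow> real" and K :: "'a \<Rightarrow> 'a \<Rightarrow> real"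
  assumes w_pos: "\<And>j. 0 < w j"
    and \<phi>_measurable [measurable]: "\<And>j. \<phi> j \<in> borel_measurable \<mu>"
    and \<phi>_square_integrable: "\<And>j. integrable \<mu> (\<lambda>x. (\<phi> j x)\<^sup>2)"
    and \<phi>_orthonormal: "\<And>i j. (LINT x|\<mu>. \<phi> i x * \<phi> j x) = (if i = j then 1 else 0)"
    and K_expansion: "\<And>s t. (\<lambda>j. w j * \<phi> j s * \<phi> j t) sums K s t"
    and K_diag_bdd: "bdd_above (range (\<lambda>x. K x x))"
begin

definition diag_sup :: real where
  "diag_sup = (SUP x. K x x)"

lemma w_nonneg: "0 \<le> w j"
  using w_pos[of j] by simp

lemma K_diag_sums: "(\<lambda>j. w j * (\<phi> j s)\<^sup>2) sums K s s"
  using K_expansion[of s s] by (simp add: power2_eq_square mult.assoc)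

lemma partial_diag_le: "(\<Sum>j<m. w j * (\<phi> j s)\<^sup>2) \<le> K s s"
proof -
  have "(\<Sum>j<m. w j * (\<phi> j s)\<^sup>2) \<le> (\<Sum>j. w j * (\<phi> j s)\<^sup>2)"
    using sums_summable[OF K_diag_sums] by (intro sum_le_suminf) (auto simp: w_nonneg)
  then show ?thesis using sums_unique[OF K_diag_sums] by simp
qed

lemma K_diag_nonneg: "0 \<le> K s s"
  using partial_diag_le[where m=0 and s=s] by simp

lemma K_diag_le: "K s s \<le> diag_sup"
  unfolding diag_sup_def by (rule cSUP_upper[OF UNIV_I K_diag_bdd])

lemma diag_sup_nonneg: "0 \<le> diag_sup"
  using K_diag_nonneg K_diag_le order_trans by blast

lemma partial_sum_abs_le: "\<bar>\<Sum>j<m. w j * \<phi> j s * \<phi> j t\<bar> \<le> diag_sup"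
proof -
  have "\<bar>\<Sum>j<m. w j * \<phi> j s * \<phi> j t\<bar> \<le> (\<Sum>j<m. (w j * (\<phi> j s)\<^sup>2 + w j * (\<phi> j t)\<^sup>2) / 2)"
    by (rule order_trans[OF sum_abs sum_mono]) (rule abs_weighted_mult_le[OF w_nonneg])
  also have "\<dots> = ((\<Sum>j<m. w j * (\<phi> j s)\<^sup>2) + (\<Sum>j<m. w j * (\<phi> j t)\<^sup>2)) / 2"
    by (simp add: sum.distrib add_divide_distrib sum_divide_distrib)
  also have "\<dots> \<le> (K s s + K t t) / 2"
    using partial_diag_le by (intro divide_right_mono add_mono) auto
  also have "\<dots> \<le> (diag_sup + diag_sup) / 2"
    using K_diag_le by (intro divide_right_mono add_mono) auto
  finally show ?thesis by simp
qed

lemma K_partial_sums: "(\<lambda>m. \<Sum>j<m. w j * \<phi> j s * \<phi> j t) \<longlonglongrightarrow> K s t"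
  using K_expansion unfolding sums_def .

lemma K_abs_le: "\<bar>K s t\<bar> \<le> diag_sup"
  by (rule LIMSEQ_le_const2[OF tendsto_rabs[OF K_partial_sums]]) (use partial_sum_abs_le in auto)

lemma K_measurable [measurable]:
  "(\<lambda>t. K s t) \<in> borel_measurable \<mu>" "(\<lambda>s. K s t) \<in> borel_measurable \<mu>"
  "(\<lambda>s. K s s) \<in> borel_measurable \<mu>"
  by (rule borel_measurable_LIMSEQ_real[OF K_partial_sums]; measurable)+

lemma \<phi>_integrable: "integrable \<mu> (\<phi> j)"
  by (rule square_integrable_imp_integrable[OF \<phi>_measurable \<phi>_square_integrable])

lemma \<phi>_mult_integrable: "integrable \<mu> (\<lambda>x. \<phi> i x * \<phi> j x)"
proof (rule Bochner_Integration.integrable_bound)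
  show "integrable \<mu> (\<lambda>x. ((\<phi> i x)\<^sup>2 + (\<phi> j x)\<^sup>2) / 2)"
    using \<phi>_square_integrable by auto
  show "AE x in \<mu>. norm (\<phi> i x * \<phi> j x) \<le> norm (((\<phi> i x)\<^sup>2 + (\<phi> j x)\<^sup>2) / 2)"
    using abs_mult_le_half_sq_sum by (intro AE_I2) (simp add: abs_le_iff)
qed measurable

lemma integrable_mult_K: "integrable \<mu> v \<Longrightarrow> integrable \<mu> (\<lambda>s. v s * K x s)"
proof (rule Bochner_Integration.integrable_bound)
  assume v: "integrable \<mu> v"
  then show "integrable \<mu> (\<lambda>s. diag_sup * \<bar>v s\<bar>)" by simp
  show "AE s in \<mu>. norm (v s * K x s) \<le> norm (diag_sup * \<bar>v s\<bar>)"
    by (intro AE_I2)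
      (simp add: abs_mult mult.commute[of diag_sup] mult_left_mono K_abs_le
        abs_of_nonneg[OF diag_sup_nonneg])
  show "(\<lambda>s. v s * K x s) \<in> borel_measurable \<mu>" using v by measurable
qed

lemma integral_mult_K_series:
  assumes v: "integrable \<mu> v" and v\<phi>: "\<And>j. integrable \<mu> (\<lambda>s. v s * \<phi> j s)"
  shows "(\<lambda>m. \<Sum>j<m. w j * \<phi> j x * (LINT s|\<mu>. v s * \<phi> j s)) \<longlonglongrightarrow> (LINT s|\<mu>. v s * K x s)"
proof -
  have [measurable]: "v \<in> borel_measurable \<mu>" using v by simp
  have partial: "(LINT s|\<mu>. v s * (\<Sum>j<m. w j * \<phi> j x * \<phi> j s))
                   = (\<Sum>j<m. w j * \<phi> j x * (LINT s|\<mu>. v s * \<phi> j s))" for m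
  proof -
    have "(LINT s|\<mu>. v s * (\<Sum>j<m. w j * \<phi> j x * \<phi> j s))
            = (LINT s|\<mu>. (\<Sum>j<m. w j * \<phi> j x * (v s * \<phi> j s)))"
      by (simp add: sum_distrib_left ac_simps)
    also have "\<dots> = (\<Sum>j<m. w j * \<phi> j x * (LINT s|\<mu>. v s * \<phi> j s))"
      using v\<phi> by (subst Bochner_Integration.integral_sum) auto
    finally show ?thesis .
  qed
  have "(\<lambda>m. LINT s|\<mu>. v s * (\<Sum>j<m. w j * \<phi> j x * \<phi> j s)) \<longlonglongrightarrow> (LINT s|\<mu>. v s * K x s)"
  proof (rule integral_dominated_convergence[where w="\<lambda>s. diag_sup * \<bar>v s\<bar>"])
    show "AE s in \<mu>. (\<lambda>m. v s * (\<Sum>j<m. w j * \<phi> j x * \<phi> j s)) \<longlonglongrightarrow> v s * K x s"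
      by (intro AE_I2 tendsto_mult_left K_partial_sums)
    show "AE s in \<mu>. norm (v s * (\<Sum>j<m. w j * \<phi> j x * \<phi> j s)) \<le> diag_sup * \<bar>v s\<bar>" for m
    proof (intro AE_I2)
      fix s
      have "\<bar>v s\<bar> * \<bar>\<Sum>j<m. w j * \<phi> j x * \<phi> j s\<bar> \<le> \<bar>v s\<bar> * diag_sup"
        using partial_sum_abs_le by (rule mult_left_mono) simp
      then show "norm (v s * (\<Sum>j<m. w j * \<phi> j x * \<phi> j s)) \<le> diag_sup * \<bar>v s\<bar>"
        by (simp add: abs_mult mult.commute)
    qed
    show "integrable \<mu> (\<lambda>s. diag_sup * \<bar>v s\<bar>)" using v by simp
  qed measurable
  then show ?thesis unfolding partial .
qed

lemma K_commute: "K s t = K t s"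
proof -
  have "(\<lambda>j. w j * \<phi> j t * \<phi> j s) sums K s t" using K_expansion[of s t] by (simp add: ac_simps)
  then show ?thesis using K_expansion[of t s] by (rule sums_unique2)
qed

definition eigen_comb :: "nat set \<Rightarrow> (nat \<Rightarrow> real) \<Rightarrow> 'a \<Rightarrow> real" where
  "eigen_comb J b s = (\<Sum>j\<in>J. b j * \<phi> j s)"

lemma integrable_eigen_comb: "integrable \<mu> (eigen_comb J b)"
  unfolding eigen_comb_def using \<phi>_integrable by auto

lemma integrable_eigen_comb_mult_\<phi>: "integrable \<mu> (\<lambda>s. eigen_comb J b s * \<phi> k s)"
  unfolding eigen_comb_def sum_distrib_right using \<phi>_mult_integrable by (auto simp: mult.assoc)

lemma integral_eigen_comb_mult_\<phi>:
  assumes "finite J"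
  shows "(LINT s|\<mu>. eigen_comb J b s * \<phi> k s) = (if k \<in> J then b k else 0)"
proof -
  have "(LINT s|\<mu>. eigen_comb J b s * \<phi> k s) = (\<Sum>j\<in>J. b j * (LINT s|\<mu>. \<phi> j s * \<phi> k s))"
    unfolding eigen_comb_def sum_distrib_right
    by (subst Bochner_Integration.integral_sum) (use \<phi>_mult_integrable in \<open>auto simp: mult.assoc\<close>)
  also have "\<dots> = (\<Sum>j\<in>J. if j = k then b j else 0)"
    by (intro sum.cong) (auto simp: \<phi>_orthonormal)
  finally show ?thesis using assms by (simp add: sum.delta')
qed

lemma integrable_eigen_comb_sq: "integrable \<mu> (\<lambda>s. eigen_comb J b s * eigen_comb J b s)"
proof -
  have "(\<lambda>s. eigen_comb J b s * eigen_comb J b s) = (\<lambda>s. \<Sum>j\<in>J. b j * (eigen_comb J b s * \<phi> j s))"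
    by (simp add: eigen_comb_def[of J b] sum_distrib_left ac_simps)
  then show ?thesis using integrable_eigen_comb_mult_\<phi> by simp
qed

lemma integral_eigen_comb_mult_K:
  assumes J: "finite J"
  shows "(LINT t|\<mu>. eigen_comb J b t * K x t) = (\<Sum>j\<in>J. w j * b j * \<phi> j x)"
proof -
  obtain N where N: "J \<subseteq> {..<N}" using J finite_nat_iff_bounded by auto
  have "(\<Sum>j<m + N. w j * \<phi> j x * (LINT s|\<mu>. eigen_comb J b s * \<phi> j s)) = (\<Sum>j\<in>J. w j * b j * \<phi> j x)"
    for m
  proof -
    have "(\<Sum>j<m + N. w j * \<phi> j x * (LINT s|\<mu>. eigen_comb J b s * \<phi> j s))
            = (\<Sum>j<m + N. if j \<in> J then w j * b j * \<phi> j x else 0)"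
      unfolding integral_eigen_comb_mult_\<phi>[OF J] by (intro sum.cong) auto
    also have "\<dots> = (\<Sum>j\<in>{..<m + N} \<inter> J. w j * b j * \<phi> j x)" by (simp add: sum.inter_restrict)
    also have "{..<m + N} \<inter> J = J" using N by auto
    finally show ?thesis .
  qed
  then have "(\<lambda>m. \<Sum>j\<in>J. w j * b j * \<phi> j x) \<longlonglongrightarrow> (LINT t|\<mu>. eigen_comb J b t * K x t)"
    using LIMSEQ_ignore_initial_segment[OF integral_mult_K_series[OF integrable_eigen_comb[of J b]
          integrable_eigen_comb_mult_\<phi>[of J b], where x=x], where k=N] by simp
  then show ?thesis by (simp add: LIMSEQ_const_iff)
qed

lemma integral_eigen_comb_K_eigen_comb:
  assumes J: "finite J"
  shows "integrable \<mu> (\<lambda>s. eigen_comb J b s * (LINT t|\<mu>. eigen_comb J b t * K s t))"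
    and "(LINT s|\<mu>. eigen_comb J b s * (LINT t|\<mu>. eigen_comb J b t * K s t))
           = (\<Sum>j\<in>J. w j * (b j)\<^sup>2)"
proof -
  have eq: "(\<lambda>s. eigen_comb J b s * (LINT t|\<mu>. eigen_comb J b t * K s t))
              = (\<lambda>s. \<Sum>j\<in>J. w j * b j * (eigen_comb J b s * \<phi> j s))"
    unfolding integral_eigen_comb_mult_K[OF J] by (simp add: sum_distrib_left ac_simps)
  show "integrable \<mu> (\<lambda>s. eigen_comb J b s * (LINT t|\<mu>. eigen_comb J b t * K s t))"
    unfolding eq using integrable_eigen_comb_mult_\<phi> by simp
  have "(LINT s|\<mu>. (\<Sum>j\<in>J. w j * b j * (eigen_comb J b s * \<phi> j s))) = (\<Sum>j\<in>J. w j * b j * b j)"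
    using integrable_eigen_comb_mult_\<phi> by (simp add: integral_eigen_comb_mult_\<phi>[OF J])
  then show "(LINT s|\<mu>. eigen_comb J b s * (LINT t|\<mu>. eigen_comb J b t * K s t))
              = (\<Sum>j\<in>J. w j * (b j)\<^sup>2)"
    unfolding eq by (simp add: power2_eq_square mult.assoc)
qed

lemma integrable_eigen_comb_sq_K_diag:
  "integrable \<mu> (\<lambda>s. eigen_comb J b s * (eigen_comb J b s * K s s))"
proof (rule Bochner_Integration.integrable_bound)
  show "integrable \<mu> (\<lambda>s. diag_sup * (eigen_comb J b s * eigen_comb J b s))"
    using integrable_eigen_comb_sq by simp
  have [measurable]: "eigen_comb J b \<in> borel_measurable \<mu>" using integrable_eigen_comb by simp
  show "(\<lambda>s. eigen_comb J b s * (eigen_comb J b s * K s s)) \<in> borel_measurable \<mu>" by measurable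
  show "AE s in \<mu>. norm (eigen_comb J b s * (eigen_comb J b s * K s s))
                    \<le> norm (diag_sup * (eigen_comb J b s * eigen_comb J b s))"
  proof (intro AE_I2)
    fix s
    let ?x = "eigen_comb J b s"
    have nonneg: "0 \<le> ?x * (?x * K s s)"
      by (metis K_diag_nonneg mult.assoc mult_nonneg_nonneg zero_le_square)
    have le: "?x * (?x * K s s) \<le> diag_sup * (?x * ?x)"
      using mult_left_mono[OF K_diag_le[of s] zero_le_square[of ?x]] by (simp add: ac_simps)
    show "norm (?x * (?x * K s s)) \<le> norm (diag_sup * (?x * ?x))"
      using le abs_of_nonneg[OF nonneg] abs_of_nonneg[OF order_trans[OF nonneg le]] by simp
  qed
qed

end

section \<open>Bessel's inequality in the RKHS\<close>

locale eigen_rkhs = eigen_kernel \<mu> w \<phi> K + rkhs_space K H ip for \<mu> w \<phi> K H ip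
begin

lemma eval_abs_le_diag_sup: "h \<in> H \<Longrightarrow> \<bar>h s\<bar> \<le> sqrt (ip h h) * sqrt diag_sup"
  using eval_bound[of h s] real_sqrt_le_mono[OF K_diag_le[of s]] ip_self_nonneg[of h]
  by (meson mult_left_mono order_trans real_sqrt_ge_zero)

lemma integrable_eigen_comb_mult_sq:
  assumes h: "h \<in> H" and ah: "integrable \<mu> (\<lambda>s. eigen_comb J b s * h s)"
  shows "integrable \<mu> (\<lambda>s. (eigen_comb J b s * h s) * (eigen_comb J b s * h s))"
proof (rule Bochner_Integration.integrable_bound)
  let ?a = "eigen_comb J b"
  let ?c = "sqrt (ip h h) * sqrt diag_sup"
  show "integrable \<mu> (\<lambda>s. ?c\<^sup>2 * (?a s * ?a s))"
    using integrable_eigen_comb_sq by simp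
  show "(\<lambda>s. (?a s * h s) * (?a s * h s)) \<in> borel_measurable \<mu>" using ah by measurable
  show "AE s in \<mu>. norm ((?a s * h s) * (?a s * h s)) \<le> norm (?c\<^sup>2 * (?a s * ?a s))"
  proof (intro AE_I2)
    fix s
    have "\<bar>h s\<bar> * \<bar>h s\<bar> \<le> ?c * ?c"
      using eval_abs_le_diag_sup[OF h, of s] by (intro mult_mono) auto
    then have "\<bar>?a s\<bar> * \<bar>?a s\<bar> * (\<bar>h s\<bar> * \<bar>h s\<bar>) \<le> \<bar>?a s\<bar> * \<bar>?a s\<bar> * (?c * ?c)"
      by (intro mult_left_mono) auto
    then show "norm ((?a s * h s) * (?a s * h s)) \<le> norm (?c\<^sup>2 * (?a s * ?a s))"
      by (simp add: abs_mult power2_eq_square ac_simps)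
  qed
qed

text \<open>The positive semidefinite kernel \<open>F s t = \<parallel>h\<parallel>\<^sup>2 a(s) a(t) K(s,t) - a(s) h(s) a(t) h(t)\<close>
  has a nonnegative double integral; this is the integral form of Cauchy--Schwarz between
  \<open>h\<close> and \<open>\<integral> a(t) K(-,t) dt\<close>, which need not lie in \<open>H\<close>.\<close>
lemma integral_cauchy_schwarz:
  assumes h: "h \<in> H" and J: "finite J" and ah: "integrable \<mu> (\<lambda>s. eigen_comb J b s * h s)"
  shows "(LINT s|\<mu>. eigen_comb J b s * h s)\<^sup>2 \<le> ip h h * (\<Sum>j\<in>J. w j * (b j)\<^sup>2)"
proof -
  let ?a = "eigen_comb J b"
  define B where "B = ip h h"
  define g where "g = (\<lambda>s. ?a s * h s)"
  define G where "G = (LINT s|\<mu>. g s)"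
  define F where "F = (\<lambda>s t. B * ?a s * (?a t * K s t) - g s * g t)"
  have g_int: "integrable \<mu> g" using ah unfolding g_def .
  have F_commute: "F s t = F t s" for s t unfolding F_def by (simp add: K_commute ac_simps)
  have F_psd: "0 \<le> (\<Sum>i<n. \<Sum>k<n. F (x i) (x k))" for n :: nat and x
  proof -
    have "(\<Sum>i<n. \<Sum>k<n. F (x i) (x k))
            = B * (\<Sum>i<n. \<Sum>k<n. ?a (x i) * ?a (x k) * K (x i) (x k)) - (\<Sum>i<n. ?a (x i) * h (x i))\<^sup>2"
      unfolding F_def g_def
      by (simp add: sum_subtractf sum_distrib_left power2_eq_square sum_product ac_simps)
    then show ?thesis
      using weighted_eval_sum_sq_le[OF h, where n=n and c="\<lambda>i. ?a (x i)" and x=x]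
      unfolding B_def by simp
  qed
  have F_section_int: "integrable \<mu> (F s)" for s
    unfolding F_def using integrable_mult_K[OF integrable_eigen_comb[of J b], of s] g_int by simp
  have inner: "(LINT t|\<mu>. F s t) = B * ?a s * (LINT t|\<mu>. ?a t * K s t) - g s * G" for s
    unfolding F_def G_def using integrable_mult_K[OF integrable_eigen_comb[of J b], of s] g_int
    by simp
  have inner_int: "integrable \<mu> (\<lambda>s. LINT t|\<mu>. F s t)"
    unfolding inner using integral_eigen_comb_K_eigen_comb(1)[OF J] g_int by (simp add: mult.assoc)
  have diag_int: "integrable \<mu> (\<lambda>s. F s s)"
    unfolding F_def g_def
    using integrable_eigen_comb_sq_K_diag integrable_eigen_comb_mult_sq[OF h ah]
    by (simp add: mult.assoc)
  have "0 \<le> (LINT s|\<mu>. LINT t|\<mu>. F s t)"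
    by (rule psd_double_integral_nonneg[OF F_commute F_psd F_section_int inner_int diag_int])
  also have "\<dots> = B * (\<Sum>j\<in>J. w j * (b j)\<^sup>2) - G\<^sup>2"
    unfolding inner using integral_eigen_comb_K_eigen_comb[OF J] g_int
    by (simp add: G_def power2_eq_square mult.assoc)
  finally show ?thesis unfolding B_def G_def g_def by simp
qed

lemma bessel_inequality:
  assumes h: "h \<in> H"
  shows "(\<Sum>j<N. (l2_coeff \<mu> \<phi> h j)\<^sup>2 / w j) \<le> ip h h"
proof -
  define c where "c = l2_coeff \<mu> \<phi> h"
  \<comment> \<open>\<open>h\<close> need not be measurable; where \<open>h \<phi>\<^sub>j\<close> is not integrable, \<open>c j\<close> is the junk value 0.\<close>
  define J where "J = {j. j < N \<and> integrable \<mu> (\<lambda>x. h x * \<phi> j x)}"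
  define b where "b = (\<lambda>j. c j / w j)"
  define S where "S = (\<Sum>j\<in>J. (c j)\<^sup>2 / w j)"
  have J: "finite J" unfolding J_def by simp
  have "c j = 0" if "j \<notin> J" "j < N" for j
    using that unfolding c_def l2_coeff_def J_def by (simp add: not_integrable_integral_eq)
  then have sum_eq: "(\<Sum>j<N. (c j)\<^sup>2 / w j) = S"
    unfolding S_def by (intro sum.mono_neutral_right) (auto simp: J_def)
  have ah: "(\<lambda>s. eigen_comb J b s * h s) = (\<lambda>s. \<Sum>j\<in>J. b j * (h s * \<phi> j s))"
    unfolding eigen_comb_def sum_distrib_right by (simp add: ac_simps)
  have ah_int: "integrable \<mu> (\<lambda>s. eigen_comb J b s * h s)"
    unfolding ah by (auto simp: J_def)
  have "(LINT s|\<mu>. eigen_comb J b s * h s) = (\<Sum>j\<in>J. b j * c j)"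
    unfolding ah c_def l2_coeff_def by (subst Bochner_Integration.integral_sum) (auto simp: J_def)
  also have "\<dots> = S" unfolding S_def b_def by (simp add: power2_eq_square)
  finally have "S\<^sup>2 \<le> ip h h * (\<Sum>j\<in>J. w j * (b j)\<^sup>2)"
    using integral_cauchy_schwarz[OF h J ah_int] by simp
  also have "(\<Sum>j\<in>J. w j * (b j)\<^sup>2) = S"
    unfolding S_def b_def using w_pos by (intro sum.cong) (auto simp: power2_eq_square)
  finally have "S * S \<le> ip h h * S" by (simp add: power2_eq_square)
  moreover have "0 \<le> S"
    unfolding S_def using w_nonneg by (intro sum_nonneg divide_nonneg_nonneg) auto
  ultimately have "S \<le> ip h h"
    using ip_self_nonneg[OF h] by (cases "S = 0") (auto simp: mult_le_cancel_right)
  then show ?thesis using sum_eq unfolding c_def by simp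
qed

lemma norm_1C_le:
  assumes h: "h \<in> H" and lam: "\<And>j. 0 < lam j" and summable: "summable (\<lambda>j. w j / lam j)"
  shows "norm_1C \<mu> lam \<phi> h \<le> ennreal (sqrt (ip h h) * sqrt (\<Sum>j. w j / lam j))"
proof -
  define c where "c = l2_coeff \<mu> \<phi> h"
  have partial: "(\<Sum>j<N. \<bar>c j\<bar> / sqrt (lam j)) \<le> sqrt (ip h h) * sqrt (\<Sum>j. w j / lam j)" for N
  proof -
    have split: "\<bar>c j\<bar> / sqrt (lam j) = (\<bar>c j\<bar> / sqrt (w j)) * sqrt (w j / lam j)" for j
      using w_pos[of j] lam[of j] by (simp add: real_sqrt_divide)
    have "(\<Sum>j<N. \<bar>c j\<bar> / sqrt (lam j))\<^sup>2
            \<le> (\<Sum>j<N. (\<bar>c j\<bar> / sqrt (w j))\<^sup>2) * (\<Sum>j<N. (sqrt (w j / lam j))\<^sup>2)"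
      unfolding split by (rule Cauchy_Schwarz_ineq_sum)
    also have "\<dots> = (\<Sum>j<N. (c j)\<^sup>2 / w j) * (\<Sum>j<N. w j / lam j)"
      using w_nonneg lam by (simp add: power_divide less_imp_le)
    also have "\<dots> \<le> ip h h * (\<Sum>j. w j / lam j)"
    proof (rule mult_mono)
      show "(\<Sum>j<N. (c j)\<^sup>2 / w j) \<le> ip h h" unfolding c_def by (rule bessel_inequality[OF h])
      show "(\<Sum>j<N. w j / lam j) \<le> (\<Sum>j. w j / lam j)"
        using summable w_nonneg lam by (intro sum_le_suminf) (auto intro: divide_nonneg_pos)
    qed (use ip_self_nonneg[OF h] w_nonneg lam in \<open>auto intro!: sum_nonneg divide_nonneg_pos\<close>)
    finally have "(\<Sum>j<N. \<bar>c j\<bar> / sqrt (lam j)) \<le> sqrt (ip h h * (\<Sum>j. w j / lam j))"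
      by (rule real_le_rsqrt)
    then show ?thesis by (simp add: real_sqrt_mult)
  qed
  have "(\<Sum>j<N. ennreal (\<bar>c j\<bar> / sqrt (lam j)))
          \<le> ennreal (sqrt (ip h h) * sqrt (\<Sum>j. w j / lam j))" for N
    using partial[of N] lam
    by (subst sum_ennreal) (auto intro!: ennreal_leI divide_nonneg_nonneg simp: less_imp_le)
  then show ?thesis unfolding norm_1C_def c_def[symmetric] by (intro suminf_le_const summableI)
qed

lemma norm_1C_minimizer_diff_le:
  assumes lam: "\<And>j. 0 < lam j" and summable: "summable (\<lambda>j. w j / lam j)"
    and conv: "\<And>y. convex_on UNIV (loss y)" and lip: "\<And>y. M-lipschitz_on UNIV (loss y)"
    and \<psi>: "0 < \<psi>" and adj: "adjacent D D'"
    and mini: "is_minimizer loss \<psi> H ip D f" and mini': "is_minimizer loss \<psi> H ip D' f'"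
  shows "norm_1C \<mu> lam \<phi> (\<lambda>x. f x - f' x)
           \<le> ennreal (M / (\<psi> * real (length D)) * sqrt diag_sup * sqrt (\<Sum>j. w j / lam j))"
proof -
  define E where "E = ip (\<lambda>x. f x - f' x) (\<lambda>x. f x - f' x)"
  have "f \<in> H" "f' \<in> H" using mini mini' unfolding is_minimizer_def by blast+
  then have norm_le: "norm_1C \<mu> lam \<phi> (\<lambda>x. f x - f' x) \<le> ennreal (sqrt E * sqrt (\<Sum>j. w j / lam j))"
    unfolding E_def by (intro norm_1C_le diff_mem lam summable)
  have "sqrt E \<le> M * sqrt diag_sup / (\<psi> * real (length D))"
    unfolding E_def using diag_sup_nonneg K_diag_le
    by (intro minimizer_stability[OF conv lip \<psi> _ _ adj mini mini']) auto
  then have "sqrt E * sqrt (\<Sum>j. w j / lam j)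
               \<le> M / (\<psi> * real (length D)) * sqrt diag_sup * sqrt (\<Sum>j. w j / lam j)"
    using suminf_nonneg[OF summable] w_nonneg lam
    by (intro mult_right_mono) (auto intro: divide_nonneg_pos)
  with norm_le show ?thesis by (meson ennreal_leI order_trans)
qed

end

lemma kernel_pow_sums:
  fixes lam :: "nat \<Rightarrow> real" and \<phi> :: "nat \<Rightarrow> 'a \<Rightarrow> real"
  assumes lam_pos: "\<And>j. 0 < lam j" and lam_mono: "\<And>j. lam (Suc j) \<le> lam j" and "1 \<le> \<eta>"
    and mercer_diag: "\<And>s. summable (\<lambda>j. lam j * (\<phi> j s)\<^sup>2)"
  shows "(\<lambda>j. lam j powr \<eta> * \<phi> j s * \<phi> j t) sums kernel_pow lam \<phi> \<eta> s t"
proof -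
  have bound: "lam j powr \<eta> \<le> lam 0 powr (\<eta> - 1) * lam j" for j
  proof -
    have "lam j powr (\<eta> - 1) \<le> lam 0 powr (\<eta> - 1)"
      using lift_Suc_antimono_le[of lam, OF lam_mono, of 0 j] lam_pos[of j] \<open>1 \<le> \<eta>\<close>
      by (intro powr_mono2) auto
    moreover have "lam j powr \<eta> = lam j powr (\<eta> - 1) * lam j"
      using powr_add[of "lam j" "\<eta> - 1" 1] lam_pos[of j] by simp
    ultimately show ?thesis using mult_right_mono less_imp_le[OF lam_pos[of j]] by metis
  qed
  have "summable (\<lambda>j. lam j powr \<eta> * (\<phi> j s)\<^sup>2)" for s
  proof (rule summable_comparison_test)
    have "norm (lam j powr \<eta> * (\<phi> j s)\<^sup>2) \<le> lam 0 powr (\<eta> - 1) * (lam j * (\<phi> j s)\<^sup>2)" for j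
      using mult_right_mono[OF bound zero_le_power2] by (simp add: abs_mult mult.assoc)
    then show "\<exists>N. \<forall>j\<ge>N. norm (lam j powr \<eta> * (\<phi> j s)\<^sup>2) \<le> lam 0 powr (\<eta> - 1) * (lam j * (\<phi> j s)\<^sup>2)"
      by blast
    show "summable (\<lambda>j. lam 0 powr (\<eta> - 1) * (lam j * (\<phi> j s)\<^sup>2))"
      by (rule summable_mult[OF mercer_diag])
  qed
  then have "summable (\<lambda>j. lam j powr \<eta> * \<phi> j s * \<phi> j t)"
    by (intro summable_weighted_mult) auto
  then show ?thesis unfolding kernel_pow_def by (rule summable_sums)
qed

theorem theorem9:
  fixes \<mu> :: "'a::metric_space measure"
    and C :: "'a \<Rightarrow> 'a \<Rightarrow> real"
    and lam :: "nat \<Rightarrow> real"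
    and \<phi> :: "nat \<Rightarrow> 'a \<Rightarrow> real"
    and \<eta> \<psi> M :: real
    and H :: "('a \<Rightarrow> real) set"
    and ip :: "('a \<Rightarrow> real) \<Rightarrow> ('a \<Rightarrow> real) \<Rightarrow> real"
    and loss :: "'y \<Rightarrow> real \<Rightarrow> real"
  assumes compact_T: "compact (UNIV :: 'a set)"
    and borel_mu: "sets \<mu> = sets borel"
    and finite_mu: "finite_measure \<mu>"
    and C_cont: "continuous_on UNIV (\<lambda>(s, t). C s t)"
    and C_sym: "\<And>s t. C s t = C t s"
    and C_psd: "psd_kernel C"
    and lam_pos: "\<And>j. lam j > 0"
    and lam_mono: "\<And>j. lam (Suc j) \<le> lam j"
    and phi_meas: "\<And>j. \<phi> j \<in> borel_measurable \<mu>"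
    and phi_L2: "\<And>j. integrable \<mu> (\<lambda>x. (\<phi> j x)\<^sup>2)"
    and phi_orth: "\<And>i j. (LINT x|\<mu>. \<phi> i x * \<phi> j x) = (if i = j then 1 else 0)"
    and mercer: "\<And>s t. (\<lambda>j. lam j * \<phi> j s * \<phi> j t) sums C s t"
    and eta_gt: "\<eta> > 1"
    and trace_fin: "summable (\<lambda>j. lam j powr (\<eta> - 1))"
    and kappa_fin: "bdd_above (range (\<lambda>x. kernel_pow lam \<phi> \<eta> x x))"
    and H_rkhs: "rkhs (kernel_pow lam \<phi> \<eta>) H ip"
    and loss_convex: "\<And>y. convex_on UNIV (loss y)"
    and loss_lip: "\<And>y. M-lipschitz_on UNIV (loss y)"
    and psi_pos: "\<psi> > 0"
  shows "\<forall>D D' fD fD'. adjacent D D' \<and> length D > 0 \<and>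
            is_minimizer loss \<psi> H ip D fD \<and> is_minimizer loss \<psi> H ip D' fD' \<longrightarrow>
            norm_1C \<mu> lam \<phi> (\<lambda>x. fD x - fD' x)
              \<le> ennreal (M / (\<psi> * real (length D))
                   * sqrt (SUP x. kernel_pow lam \<phi> \<eta> x x)
                   * sqrt (\<Sum>j. lam j powr (\<eta> - 1)))"
proof (intro allI impI, elim conjE)
  fix D D' :: "('a \<times> 'y) list" and fD fD' :: "'a \<Rightarrow> real"
  assume adj: "adjacent D D'"
    and mini: "is_minimizer loss \<psi> H ip D fD" and mini': "is_minimizer loss \<psi> H ip D' fD'"
  have mercer_diag: "summable (\<lambda>j. lam j * (\<phi> j s)\<^sup>2)" for s
    using sums_summable[OF mercer[of s s]] by (simp add: power2_eq_square mult.assoc)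
  have "(\<lambda>j. lam j powr \<eta> * \<phi> j s * \<phi> j t) sums kernel_pow lam \<phi> \<eta> s t" for s t
    by (rule kernel_pow_sums[OF _ _ _ mercer_diag]) (use lam_pos lam_mono eta_gt in auto)
  then have "eigen_rkhs \<mu> (\<lambda>j. lam j powr \<eta>) \<phi> (kernel_pow lam \<phi> \<eta>) H ip"
    unfolding eigen_rkhs_def eigen_kernel_def eigen_kernel_axioms_def rkhs_space_def
    using finite_mu lam_pos phi_meas phi_L2 phi_orth kappa_fin H_rkhs
    by (simp add: less_imp_neq[OF lam_pos, symmetric])
  then interpret eigen_rkhs \<mu> "\<lambda>j. lam j powr \<eta>" \<phi> "kernel_pow lam \<phi> \<eta>" H ip .
  have "(\<lambda>j. lam j powr \<eta> / lam j) = (\<lambda>j. lam j powr (\<eta> - 1))"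
    by (simp add: powr_diff less_imp_le[OF lam_pos])
  then show "norm_1C \<mu> lam \<phi> (\<lambda>x. fD x - fD' x)
      \<le> ennreal (M / (\<psi> * real (length D)) * sqrt (SUP x. kernel_pow lam \<phi> \<eta> x x)
                   * sqrt (\<Sum>j. lam j powr (\<eta> - 1)))"
    using norm_1C_minimizer_diff_le[where lam=lam, OF lam_pos _ loss_convex loss_lip psi_pos adj
        mini mini'] trace_fin
    unfolding diag_sup_def by simp
qed

end
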